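(* Let $k\ge 2$ and $l\ge 1$ be integers. If there exists an abelian-$k$th-power-free infinite word over an alphabet of $l$ letters, then for every alphabet $\Sigma$ with $|\Sigma|=2l-1$ and every antimorphic involution $\theta$ on $\Sigma^*$, there exists an infinite word over $\Sigma$ that is pseudo-$k$th-power-free with respect to $\theta$.
   Context: For a word $w$ and letter $a$, $|w|_a$ is the number of occurrences of $a$ in $w$. A nonempty word $w$ is an abelian $k$th power if $w=u_1\cdots u_k$ with $|u_i|_a=|u_j|_a$ for all letters $a$ and all $1\le i,j\le k$; a word is abelian-$k$th-power-free if none of its factors (contiguous subwords) is an abelian $k$th power. A function $\theta:\Sigma^*\to\Sigma^*$ is an antimorphic involution if $\theta(uv)=\theta(v)\theta(u)$ and $\theta(\theta(w))=w$. A nonempty word $w$ is a pseudo $k$th power with respect to $\theta$ if $w=u_1\cdots u_k$ where for all $1\le i,j\le k$, $u_i=u_j$ or $u_i=\theta(u_j)$; a word is pseudo-$k$th-power-free if no factor of it is a pseudo $k$th power. *)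

theory Defs
  imports Main
begin

definition factor :: "(nat \<Rightarrow> 'a) \<Rightarrow> nat \<Rightarrow> nat \<Rightarrow> 'a list" where
  "factor x i j = map x [i..<j]"

definition abelian_power :: "nat \<Rightarrow> 'a list \<Rightarrow> bool" where
  "abelian_power k w \<longleftrightarrow> w \<noteq> [] \<and>
     (\<exists>us. length us = k \<and> concat us = w \<and>
        (\<forall>i<k. \<forall>j<k. \<forall>a. count_list (us ! i) a = count_list (us ! j) a))"

definition abelian_power_free_inf :: "nat \<Rightarrow> (nat \<Rightarrow> 'a) \<Rightarrow> bool" where
  "abelian_power_free_inf k x \<longleftrightarrow> (\<forall>i j. i < j \<longrightarrow> \<not> abelian_power k (factor x i j))"

definition antimorphic_involution :: "'a set \<Rightarrow> ('a list \<Rightarrow> 'a list) \<Rightarrow> bool" where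
  "antimorphic_involution S \<theta> \<longleftrightarrow>
     (\<forall>w\<in>lists S. \<theta> w \<in> lists S) \<and>
     (\<forall>u\<in>lists S. \<forall>v\<in>lists S. \<theta> (u @ v) = \<theta> v @ \<theta> u) \<and>
     (\<forall>w\<in>lists S. \<theta> (\<theta> w) = w)"

definition pseudo_power :: "('a list \<Rightarrow> 'a list) \<Rightarrow> nat \<Rightarrow> 'a list \<Rightarrow> bool" where
  "pseudo_power \<theta> k w \<longleftrightarrow> w \<noteq> [] \<and>
     (\<exists>us. length us = k \<and> concat us = w \<and>
        (\<forall>i<k. \<forall>j<k. us ! i = us ! j \<or> us ! i = \<theta> (us ! j)))"

definition pseudo_power_free_inf :: "('a list \<Rightarrow> 'a list) \<Rightarrow> nat \<Rightarrow> (nat \<Rightarrow> 'a) \<Rightarrow> bool" where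
  "pseudo_power_free_inf \<theta> k x \<longleftrightarrow> (\<forall>i j. i < j \<longrightarrow> \<not> pseudo_power \<theta> k (factor x i j))"

end

theory Submission
  imports Defs "HOL-Library.Multiset"
begin

text \<open>An antimorphic involution \<open>\<theta>\<close> reverses a word and applies a letter involution \<open>t\<close>.
  Choosing one letter from each \<open>t\<close>-orbit gives a subalphabet \<open>S\<close> of at least half the
  letters, on which \<open>t\<close> can only be the identity. On words over \<open>S\<close>, \<open>\<theta> u\<close> is the
  reversal of \<open>u\<close>, so each block of a pseudo power is equal to or an anagram of every other:
  a pseudo power over \<open>S\<close> is an abelian power. Since \<open>2 * card S \<ge> 2 * l - 1\<close>, an
  abelian-power-free word over \<open>l\<close> letters can be recoded injectively into \<open>S\<close>.\<close>

definition letter_involution :: "('a list \<Rightarrow> 'a list) \<Rightarrow> 'a \<Rightarrow> 'a" where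
  "letter_involution \<theta> a = hd (\<theta> [a])"

lemma antimorphic_involution_Nil:
  assumes "antimorphic_involution S \<theta>"
  shows "\<theta> [] = []"
proof -
  have "\<theta> [] = \<theta> [] @ \<theta> []"
    using assms lists.Nil unfolding antimorphic_involution_def by (metis append_Nil)
  then show ?thesis by simp
qed

lemma antimorphic_involution_Cons:
  assumes "antimorphic_involution S \<theta>" and "a \<in> S" and "w \<in> lists S"
  shows "\<theta> (a # w) = \<theta> w @ \<theta> [a]"
  using assms unfolding antimorphic_involution_def by (metis append_Cons append_Nil lists.simps)

lemma antimorphic_involution_length_ge:
  assumes A: "antimorphic_involution S \<theta>"
  shows "w \<in> lists S \<Longrightarrow> length w \<le> length (\<theta> w)"
proof (induction w)
  case Nil
  then show ?case by simp
next
  case (Cons a w)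
  have "\<theta> [a] \<noteq> []"
  proof
    assume "\<theta> [a] = []"
    then have "\<theta> (\<theta> [a]) = []" using antimorphic_involution_Nil[OF A] by simp
    moreover have "\<theta> (\<theta> [a]) = [a]" using A Cons.prems unfolding antimorphic_involution_def by auto
    ultimately show False by simp
  qed
  moreover have "\<theta> (a # w) = \<theta> w @ \<theta> [a]"
    using Cons.prems by (intro antimorphic_involution_Cons[OF A]) auto
  ultimately show ?case using Cons by (cases "\<theta> [a]") auto
qed

lemma antimorphic_involution_singleton:
  assumes A: "antimorphic_involution S \<theta>" and a: "a \<in> S"
  shows "\<theta> [a] = [letter_involution \<theta> a]" and "letter_involution \<theta> a \<in> S"
proof -
  have in_S: "\<theta> [a] \<in> lists S" using A a unfolding antimorphic_involution_def by auto
  have "length (\<theta> [a]) \<le> length (\<theta> (\<theta> [a]))"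
    using antimorphic_involution_length_ge[OF A in_S] .
  moreover have "\<theta> (\<theta> [a]) = [a]" using A a unfolding antimorphic_involution_def by auto
  moreover have "1 \<le> length (\<theta> [a])" using antimorphic_involution_length_ge[OF A, of "[a]"] a by simp
  ultimately have "length (\<theta> [a]) = 1" by simp
  then show "\<theta> [a] = [letter_involution \<theta> a]" and "letter_involution \<theta> a \<in> S"
    using in_S unfolding letter_involution_def by (cases "\<theta> [a]"; auto)+
qed

lemma letter_involution_involutive:
  assumes A: "antimorphic_involution S \<theta>" and a: "a \<in> S"
  shows "letter_involution \<theta> (letter_involution \<theta> a) = a"
proof -
  have "\<theta> (\<theta> [a]) = [a]" using A a unfolding antimorphic_involution_def by auto
  then have "\<theta> [letter_involution \<theta> a] = [a]"
    using antimorphic_involution_singleton(1)[OF A a] by simp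
  then show ?thesis unfolding letter_involution_def by simp
qed

lemma antimorphic_involution_eq_rev_map:
  assumes A: "antimorphic_involution S \<theta>"
  shows "w \<in> lists S \<Longrightarrow> \<theta> w = rev (map (letter_involution \<theta>) w)"
proof (induction w)
  case Nil
  then show ?case using antimorphic_involution_Nil[OF A] by simp
next
  case (Cons a w)
  then have "\<theta> (a # w) = \<theta> w @ [letter_involution \<theta> a]"
    using antimorphic_involution_Cons[OF A] antimorphic_involution_singleton(1)[OF A] by simp
  then show ?case using Cons by simp
qed

text \<open>The representative of the orbit \<open>{a, t a}\<close> depends only on the orbit, hence
  \<open>r (t a) = r a\<close> and \<open>r (r a) = r a\<close>.\<close>

lemma involution_transversal:
  assumes fin: "finite A" and maps: "\<And>a. a \<in> A \<Longrightarrow> t a \<in> A"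
    and inv: "\<And>a. a \<in> A \<Longrightarrow> t (t a) = a"
  obtains S where "S \<subseteq> A" and "card A \<le> 2 * card S"
    and "\<And>a. a \<in> S \<Longrightarrow> t a \<in> S \<Longrightarrow> t a = a"
proof -
  define r where "r a = (SOME b. b \<in> {a, t a})" for a
  have r_orbit: "r a = a \<or> r a = t a" for a
    using someI[of "\<lambda>b. b \<in> {a, t a}" a] unfolding r_def by auto
  have r_in: "r a \<in> A" if "a \<in> A" for a
    using r_orbit[of a] maps[OF that] that by auto
  have r_t: "r (t a) = r a" if "a \<in> A" for a
  proof -
    have "{t a, t (t a)} = {a, t a}" using inv[OF that] by auto
    then show ?thesis unfolding r_def by simp
  qed
  have r_r: "r (r a) = r a" if "a \<in> A" for a
    using r_orbit[of a] r_t[OF that] by auto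
  define S where "S = r ` A"
  have S_sub: "S \<subseteq> A" unfolding S_def using r_in by auto
  have cover: "A \<subseteq> S \<union> t ` S"
  proof
    fix a assume a: "a \<in> A"
    have "a = r a \<or> a = t (r a)" using r_orbit[of a] inv[OF a] by auto
    then show "a \<in> S \<union> t ` S" using a unfolding S_def by blast
  qed
  have "finite S" using fin S_sub by (rule finite_subset[rotated])
  have "card A \<le> card (S \<union> t ` S)"
    using \<open>finite S\<close> cover by (intro card_mono) auto
  also have "\<dots> \<le> card S + card (t ` S)" by (rule card_Un_le)
  also have "\<dots> \<le> 2 * card S" using card_image_le[OF \<open>finite S\<close>, of t] by simp
  finally have card_le: "card A \<le> 2 * card S" .
  have no_pairs: "t a = a" if a_S: "a \<in> S" and ta_S: "t a \<in> S" for a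
  proof -
    obtain b where b: "b \<in> A" "a = r b" using a_S unfolding S_def by blast
    obtain c where c: "c \<in> A" "t a = r c" using ta_S unfolding S_def by blast
    have "a \<in> A" using b r_in by simp
    have "t a = r (t a)" using c r_r by simp
    also have "\<dots> = r a" using r_t[OF \<open>a \<in> A\<close>] .
    also have "\<dots> = a" using b r_r by simp
    finally show ?thesis .
  qed
  show ?thesis by (rule that[OF S_sub card_le no_pairs])
qed

lemma pseudo_power_imp_abelian_power:
  assumes rev_map: "\<And>u. u \<in> lists S \<Longrightarrow> \<theta> u = rev (map t u)"
    and no_pairs: "\<And>a. a \<in> S \<Longrightarrow> t a \<in> S \<Longrightarrow> t a = a"
    and "w \<in> lists S" and "pseudo_power \<theta> k w"
  shows "abelian_power k w"
proof -
  obtain us where us: "length us = k" "concat us = w"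
    "\<forall>p<k. \<forall>q<k. us ! p = us ! q \<or> us ! p = \<theta> (us ! q)"
    using \<open>pseudo_power \<theta> k w\<close> unfolding pseudo_power_def by blast
  have block_S: "us ! p \<in> lists S" if "p < k" for p
    using \<open>w \<in> lists S\<close> that us(1,2) by (auto dest: nth_mem)
  have "count_list (us ! p) a = count_list (us ! q) a" if p: "p < k" and q: "q < k" for p q a
  proof -
    have "us ! p = us ! q \<or> us ! p = \<theta> (us ! q)" using us(3) p q by blast
    then have "us ! p = us ! q \<or> us ! p = rev (map t (us ! q))"
      using rev_map[OF block_S[OF q]] by simp
    moreover have "map t (us ! q) = us ! q" if "us ! p = rev (map t (us ! q))"
    proof (rule map_idI)
      fix b assume "b \<in> set (us ! q)"
      then have "t b \<in> set (us ! p)" using that by simp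
      then show "t b = b"
        using no_pairs block_S[OF p] block_S[OF q] \<open>b \<in> set (us ! q)\<close> by blast
    qed
    ultimately show ?thesis by (metis count_list_rev)
  qed
  then show ?thesis
    using us(1,2) \<open>pseudo_power \<theta> k w\<close> unfolding abelian_power_def pseudo_power_def by blast
qed

lemma abelian_power_map:
  assumes "abelian_power k w"
  shows "abelian_power k (map f w)"
proof -
  obtain us where us: "length us = k" "concat us = w"
    "\<forall>p<k. \<forall>q<k. \<forall>a. count_list (us ! p) a = count_list (us ! q) a"
    using assms unfolding abelian_power_def by blast
  have counts: "count_list (map f (us ! p)) b = count_list (map f (us ! q)) b"
    if "p < k" "q < k" for p q b
  proof -
    have "count_list (us ! p) a = count_list (us ! q) a" for a using us(3) that by blast
    then have "mset (us ! p) = mset (us ! q)" by (simp add: multiset_eq_iff count_mset)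
    then have "mset (map f (us ! p)) = mset (map f (us ! q))" by simp
    then show ?thesis by (rule mset_eq_length_filter)
  qed
  show ?thesis
    unfolding abelian_power_def
  proof (intro conjI exI[of _ "map (map f) us"])
    show "map f w \<noteq> []" using assms by (simp add: abelian_power_def)
    show "length (map (map f) us) = k" using us(1) by simp
    show "concat (map (map f) us) = map f w" unfolding us(2)[symmetric] by (simp add: map_concat)
    show "\<forall>p<k. \<forall>q<k. \<forall>b. count_list (map (map f) us ! p) b = count_list (map (map f) us ! q) b"
      using counts us(1) by (metis length_map nth_map)
  qed
qed

lemma abelian_power_free_inf_comp:
  assumes "inj_on f (range w)" and "abelian_power_free_inf k w"
  shows "abelian_power_free_inf k (f \<circ> w)"
  unfolding abelian_power_free_inf_def
proof (intro allI impI notI)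
  fix i j :: nat
  assume "i < j" and "abelian_power k (factor (f \<circ> w) i j)"
  moreover have "factor (f \<circ> w) i j = map f (factor w i j)" unfolding factor_def by simp
  ultimately have "abelian_power k (map f (factor w i j))" by simp
  then have "abelian_power k (map (inv_into (range w) f) (map f (factor w i j)))"
    by (rule abelian_power_map)
  moreover have "inv_into (range w) f (f (w n)) = w n" for n
    using assms(1) by (simp add: inv_into_f_f)
  then have "map (inv_into (range w) f) (map f (factor w i j)) = factor w i j"
    unfolding factor_def by simp
  ultimately show False
    using assms(2) \<open>i < j\<close> unfolding abelian_power_free_inf_def by simp
qed

lemma pseudo_power_free_inf_if_abelian_power_free_inf:
  assumes "\<And>u. u \<in> lists S \<Longrightarrow> \<theta> u = rev (map t u)"
    and "\<And>a. a \<in> S \<Longrightarrow> t a \<in> S \<Longrightarrow> t a = a"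
    and "\<And>n. x n \<in> S" and "abelian_power_free_inf k x"
  shows "pseudo_power_free_inf \<theta> k x"
  unfolding pseudo_power_free_inf_def
proof (intro allI impI notI)
  fix i j :: nat
  assume "i < j" and "pseudo_power \<theta> k (factor x i j)"
  moreover have "factor x i j \<in> lists S" using assms(3) unfolding factor_def by auto
  ultimately have "abelian_power k (factor x i j)"
    using pseudo_power_imp_abelian_power[OF assms(1,2)] by blast
  then show False using assms(4) \<open>i < j\<close> unfolding abelian_power_free_inf_def by blast
qed

theorem mainTheorem13:
  fixes k l :: nat
  assumes "k \<ge> 2" and "l \<ge> 1"
    and "\<exists>w :: nat \<Rightarrow> nat. (\<forall>n. w n < l) \<and> abelian_power_free_inf k w"
  shows "\<forall>(\<Sigma> :: 'a set) \<theta>. finite \<Sigma> \<and> card \<Sigma> = 2 * l - 1 \<and> antimorphic_involution \<Sigma> \<theta> \<longrightarrow>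
           (\<exists>x :: nat \<Rightarrow> 'a. (\<forall>n. x n \<in> \<Sigma>) \<and> pseudo_power_free_inf \<theta> k x)"
proof (intro allI impI)
  fix \<Sigma> :: "'a set" and \<theta>
  assume "finite \<Sigma> \<and> card \<Sigma> = 2 * l - 1 \<and> antimorphic_involution \<Sigma> \<theta>"
  then have fin: "finite \<Sigma>" and card: "card \<Sigma> = 2 * l - 1" and A: "antimorphic_involution \<Sigma> \<theta>"
    by auto
  obtain w :: "nat \<Rightarrow> nat" where w: "\<forall>n. w n < l" "abelian_power_free_inf k w"
    using assms(3) by blast
  let ?t = "letter_involution \<theta>"
  obtain S where S: "S \<subseteq> \<Sigma>" "card \<Sigma> \<le> 2 * card S"
    and no_pairs: "\<And>a. a \<in> S \<Longrightarrow> ?t a \<in> S \<Longrightarrow> ?t a = a"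
    using involution_transversal[OF fin antimorphic_involution_singleton(2)[OF A]
        letter_involution_involutive[OF A]] by blast
  have rev_map: "\<theta> u = rev (map ?t u)" if "u \<in> lists S" for u
  proof -
    have "u \<in> lists \<Sigma>" using that S(1) by auto
    then show ?thesis by (rule antimorphic_involution_eq_rev_map[OF A])
  qed
  have "finite S" using fin S(1) by (rule finite_subset[rotated])
  moreover have "card {0..<l} \<le> card S" using S(2) card assms(2) by simp
  ultimately obtain f where f: "f ` {0..<l} \<subseteq> S" "inj_on f {0..<l}"
    using card_le_inj[OF finite_atLeastLessThan] by blast
  have w_range: "range w \<subseteq> {0..<l}" using w(1) by auto
  have x_S: "(f \<circ> w) n \<in> S" for n using f(1) w(1) by auto
  have "abelian_power_free_inf k (f \<circ> w)"
    using abelian_power_free_inf_comp[OF inj_on_subset[OF f(2) w_range] w(2)] .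
  then have "pseudo_power_free_inf \<theta> k (f \<circ> w)"
    using pseudo_power_free_inf_if_abelian_power_free_inf[where x = "f \<circ> w"] rev_map no_pairs x_S
    by blast
  then show "\<exists>x :: nat \<Rightarrow> 'a. (\<forall>n. x n \<in> \<Sigma>) \<and> pseudo_power_free_inf \<theta> k x"
    using x_S S(1) by blast
qed

end
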